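(* Assume (R). Writing $F_n'$, $F_n''$ for derivatives with respect to $u$: $$nF_{n-1}(u)=\begin{cases}F_n'(u),& n\ge2\text{ even},\\ 2F_n(u)+(4u+1)F_n'(u),& n\ge1\text{ odd},\end{cases}$$ $$(n)_2F_{n-2}(u)=\begin{cases}2F_n'(u)+(4u+1)F_n''(u),& n\ge2\text{ even},\\ 6F_n'(u)+(4u+1)F_n''(u),& n\ge3\text{ odd}.\end{cases}$$ For the coefficients, for $0\le k\le d_{n-1}$: $$n\hat f_{n-1,k}=\begin{cases}\hat f_{n,k+1},& n\ge2\text{ even},\\ (4k+2)\hat f_{n,k}+\hat f_{n,k+1},& n\ge1\text{ odd},\end{cases}$$ and for $0\le k\le d_{n-2}$: $$(n)_2\hat f_{n-2,k}=\begin{cases}(4k+2)\hat f_{n,k+1}+\hat f_{n,k+2},& n\ge2\text{ even},\\ (4k+6)\hat f_{n,k+1}+\hat f_{n,k+2},& n\ge3\text{ odd}.\end{cases}$$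
   Context: Let $(\alpha_n)_{n\ge0}$ be an arbitrary sequence of complex numbers with Appell polynomials $A_n(x)=\sum_{\nu=0}^{n}\binom{n}{\nu}\alpha_{n-\nu}x^\nu$; property (R) means $A_n(1-x)=(-1)^nA_n(x)$ for all $n\ge0$. Let $d_n=\lfloor n/2\rfloor$, $\delta_n=1$ if $n$ odd, $0$ otherwise. Under (R), for each $n\ge0$ there is a unique polynomial $F_n(u)=\sum_{k\ge0}f_{n,k}u^k$ of degree at most $d_n$ with $A_n(x)=(2x-1)^{\delta_n}F_n(x(x-1))$ (explicitly $f_{n,k}=2^{2k-n}\sum_{\nu=0}^{d_n-k}\binom{n}{2\nu}\binom{d_n-\nu}{k}S_{2\nu}(1)$ for $k\le d_n$, where $S_m(1)=\sum_{\mu=0}^m\binom m\mu 2^\mu\alpha_\mu$), and $f_{n,k}=0$ for $k>d_n$. Set $\hat f_{n,k}=k!\,f_{n,k}$. $(n)_2=n(n-1)$. *)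

theory Defs
  imports Complex_Main "HOL-Computational_Algebra.Polynomial"
begin

definition appellA :: "(nat \<Rightarrow> complex) \<Rightarrow> nat \<Rightarrow> complex \<Rightarrow> complex" where
  "appellA \<alpha> n x = (\<Sum>\<nu>\<le>n. of_nat (n choose \<nu>) * \<alpha> (n - \<nu>) * x ^ \<nu>)"

definition propR :: "(nat \<Rightarrow> complex) \<Rightarrow> bool" where
  "propR \<alpha> \<longleftrightarrow> (\<forall>n x. appellA \<alpha> n (1 - x) = (-1) ^ n * appellA \<alpha> n x)"

definition dd :: "nat \<Rightarrow> nat" where "dd n = n div 2"

definition S1 :: "(nat \<Rightarrow> complex) \<Rightarrow> nat \<Rightarrow> complex" where
  "S1 \<alpha> m = (\<Sum>\<mu>\<le>m. of_nat (m choose \<mu>) * 2 ^ \<mu> * \<alpha> \<mu>)"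

definition fc :: "(nat \<Rightarrow> complex) \<Rightarrow> nat \<Rightarrow> nat \<Rightarrow> complex" where
  "fc \<alpha> n k = (if k \<le> dd n then
      (2::complex) powi (2 * int k - int n) *
      (\<Sum>\<nu>\<le>dd n - k. of_nat (n choose (2*\<nu>)) * of_nat ((dd n - \<nu>) choose k) * S1 \<alpha> (2*\<nu>))
    else 0)"

definition fhat :: "(nat \<Rightarrow> complex) \<Rightarrow> nat \<Rightarrow> nat \<Rightarrow> complex" where
  "fhat \<alpha> n k = fact k * fc \<alpha> n k"

definition FF :: "(nat \<Rightarrow> complex) \<Rightarrow> nat \<Rightarrow> complex poly" where
  "FF \<alpha> n = (\<Sum>k\<le>dd n. monom (fc \<alpha> n k) k)"

end

theory Submission
  imports Defs
begin

text \<open>Since \<open>\<Sum>\<^sub>k 4^k (m choose k) u^k = (1 + 4u)^m\<close>, the explicit formula for the coefficients says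
  \<open>F\<^sub>n(u) = 2^-n \<Sum>\<^sub>\<nu> (n choose 2\<nu>) S\<^sub>2\<^sub>\<nu>(1) (1 + 4u)^(d\<^sub>n - \<nu>)\<close>.
  Differentiating \<open>(1 + 4u)^m\<close> brings down the factor \<open>4m\<close>, so both first order identities
  reduce, summand by summand, to \<open>(n - 2\<nu>) (n choose 2\<nu>) = n (n - 1 choose 2\<nu>)\<close>.
  The second order identities follow by applying the first order ones twice, and the
  identities for \<open>f\<^sub>n\<^sub>,\<^sub>k\<close> by comparing coefficients.\<close>

lemma pderiv_sum: "pderiv (\<Sum>x\<in>A. f x) = (\<Sum>x\<in>A. pderiv (f x))"
  by (rule poly_eqI) (simp add: coeff_pderiv coeff_sum sum_distrib_left)

lemma smult_sum_right: "smult a (\<Sum>x\<in>A. f x) = (\<Sum>x\<in>A. smult a (f x))"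
  by (rule poly_eqI) (simp add: coeff_sum sum_distrib_left)

lemma coeff_linear_poly_power':
  "coeff ([:a, b:] ^ n) i = of_nat (n choose i) * b ^ i * a ^ (n - i)"
proof (cases "i \<le> n")
  case True
  then show ?thesis by (rule coeff_linear_poly_power)
next
  case False
  have "degree ([:a, b:] ^ n) \<le> degree [:a, b:] * n"
    by (rule degree_power_le)
  also have "\<dots> \<le> n"
    by simp
  finally show ?thesis
    using False by (simp add: coeff_eq_0 binomial_eq_0)
qed

lemma pderiv_linear_poly_power:
  "pderiv ([:a, b:] ^ m) = smult (of_nat m * b) ([:a, b:] ^ (m - 1))"
  by (simp add: pderiv_power pderiv_pCons mult.commute)

lemma linear_poly_mult_pderiv_power:
  "[:a, b:] * pderiv ([:a, b:] ^ m) = smult (of_nat m * b) ([:a, b:] ^ m)"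
proof (cases m)
  case (Suc j)
  show ?thesis
    unfolding Suc pderiv_linear_poly_power by simp
qed simp

lemma coeff_linear_poly_mult_pderiv:
  "coeff ([:a, b:] * pderiv p) k = a * of_nat (Suc k) * coeff p (Suc k) + b * of_nat k * coeff p k"
  by (cases k) (simp_all add: coeff_pderiv algebra_simps)

lemma of_nat_binomial_absorb_even:
  assumes "n = 2 * Suc h"
  shows "of_nat (n choose (2*\<nu>)) * (of_nat (Suc h - \<nu>) * 4)
    = (of_nat (2*n) * of_nat ((n - 1) choose (2*\<nu>)) :: 'a::comm_semiring_1)"
proof -
  have "n - 2*\<nu> = 2 * (Suc h - \<nu>)"
    using assms by simp
  then have "4 * (Suc h - \<nu>) * (n choose (2*\<nu>)) = 2 * ((n - 2*\<nu>) * (n choose (2*\<nu>)))"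
    by simp
  also have "\<dots> = 2 * n * ((n - 1) choose (2*\<nu>))"
    by (simp add: binomial_absorb_comp)
  finally have "of_nat (4 * (Suc h - \<nu>) * (n choose (2*\<nu>))) = (of_nat (2 * n * ((n - 1) choose (2*\<nu>))) :: 'a)"
    by (simp only:)
  then show ?thesis
    by (simp add: mult_ac)
qed

lemma of_nat_binomial_absorb_odd:
  assumes "n = 2 * h + 1" and "\<nu> \<le> h"
  shows "of_nat (n choose (2*\<nu>)) * (2 + of_nat (h - \<nu>) * 4)
    = (of_nat (2*n) * of_nat ((n - 1) choose (2*\<nu>)) :: 'a::comm_semiring_1)"
proof -
  define m where "m = h - \<nu>"
  have "n - 2*\<nu> = 2 * m + 1"
    using assms by (simp add: m_def)
  then have "(2 + 4 * m) * (n choose (2*\<nu>)) = 2 * ((n - 2*\<nu>) * (n choose (2*\<nu>)))"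
    by (simp add: algebra_simps)
  also have "\<dots> = 2 * n * ((n - 1) choose (2*\<nu>))"
    by (simp add: binomial_absorb_comp)
  finally have "of_nat ((2 + 4 * m) * (n choose (2*\<nu>))) = (of_nat (2 * n * ((n - 1) choose (2*\<nu>))) :: 'a)"
    by (simp only:)
  then show ?thesis
    unfolding m_def[symmetric] by (simp add: algebra_simps)
qed

text \<open>Under \<open>u = x(x - 1)\<close> one has \<open>1 + 4u = (2x - 1)^2\<close>, so this is the even-index part of
  \<open>\<Sum>\<^sub>j (n choose j) s\<^sub>j (2x - 1)^(n - j)\<close>, divided by \<open>(2x - 1)^\<delta>\<^sub>n\<close>.\<close>
definition even_binomial_poly :: "(nat \<Rightarrow> 'a::comm_semiring_1) \<Rightarrow> nat \<Rightarrow> 'a poly" where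
  "even_binomial_poly s n =
     (\<Sum>\<nu>\<le>n div 2. smult (of_nat (n choose (2*\<nu>)) * s \<nu>) ([:1, 4:] ^ (n div 2 - \<nu>)))"

lemma pderiv_even_binomial_poly_even:
  assumes "even n"
  shows "pderiv (even_binomial_poly s n) = smult (of_nat (2*n)) (even_binomial_poly s (n - 1))"
proof (cases "n = 0")
  case True
  then show ?thesis
    by (simp add: even_binomial_poly_def)
next
  case False
  with assms obtain h where n: "n = 2 * Suc h"
    by (metis evenE not0_implies_Suc mult_0_right)
  have summand: "smult (of_nat (n choose (2*\<nu>)) * s \<nu>) (pderiv ([:1, 4:] ^ (Suc h - \<nu>)))
      = smult (of_nat (2*n)) (smult (of_nat ((n - 1) choose (2*\<nu>)) * s \<nu>) ([:1, 4:] ^ (h - \<nu>)))"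
    for \<nu>
    using of_nat_binomial_absorb_even[OF n, of \<nu>, where 'a='a]
    by (simp add: pderiv_linear_poly_power mult_ac)
  have "pderiv (even_binomial_poly s n)
      = (\<Sum>\<nu>\<le>Suc h. smult (of_nat (n choose (2*\<nu>)) * s \<nu>) (pderiv ([:1, 4:] ^ (Suc h - \<nu>))))"
    using n by (simp only: even_binomial_poly_def pderiv_sum pderiv_smult nonzero_mult_div_cancel_left
        zero_neq_numeral)
  also have "\<dots> = (\<Sum>\<nu>\<le>Suc h.
      smult (of_nat (2*n)) (smult (of_nat ((n - 1) choose (2*\<nu>)) * s \<nu>) ([:1, 4:] ^ (h - \<nu>))))"
    by (simp only: summand)
  also have "\<dots> = smult (of_nat (2*n)) (even_binomial_poly s (n - 1))"
    \<comment> \<open>the extra summand \<open>\<nu> = Suc h\<close> vanishes because \<open>(n - 1 choose n) = 0\<close>\<close>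
    unfolding even_binomial_poly_def smult_sum_right using n by (simp add: binomial_eq_0)
  finally show ?thesis .
qed

lemma pderiv_even_binomial_poly_odd:
  assumes "odd n"
  shows "smult 2 (even_binomial_poly s n) + [:1, 4:] * pderiv (even_binomial_poly s n)
    = smult (of_nat (2*n)) (even_binomial_poly s (n - 1))"
proof -
  obtain h where n: "n = 2 * h + 1"
    using assms by (rule oddE)
  let ?t = "\<lambda>\<nu>. smult (of_nat (n choose (2*\<nu>)) * s \<nu>) ([:1, 4:] ^ (h - \<nu>))"
  have summand: "smult 2 (?t \<nu>) + [:1, 4:] * pderiv (?t \<nu>)
      = smult (of_nat (2*n)) (smult (of_nat ((n - 1) choose (2*\<nu>)) * s \<nu>) ([:1, 4:] ^ (h - \<nu>)))"
    if "\<nu> \<le> h" for \<nu>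
  proof -
    have "smult 2 (?t \<nu>) + [:1, 4:] * pderiv (?t \<nu>)
        = smult (s \<nu> * (of_nat (n choose (2*\<nu>)) * (2 + of_nat (h - \<nu>) * 4))) ([:1, 4:] ^ (h - \<nu>))"
      by (simp add: pderiv_smult linear_poly_mult_pderiv_power distrib_left smult_add_left mult_ac
          del: mult_pCons_left)
    also have "\<dots> = smult (s \<nu> * (of_nat (2*n) * of_nat ((n - 1) choose (2*\<nu>)))) ([:1, 4:] ^ (h - \<nu>))"
      by (simp only: of_nat_binomial_absorb_odd[OF n that])
    finally show ?thesis
      by (simp add: mult_ac)
  qed
  have "smult 2 (even_binomial_poly s n) + [:1, 4:] * pderiv (even_binomial_poly s n)
      = (\<Sum>\<nu>\<le>h. smult 2 (?t \<nu>) + [:1, 4:] * pderiv (?t \<nu>))"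
    unfolding even_binomial_poly_def n
    by (simp add: pderiv_sum smult_sum_right sum_distrib_left sum.distrib del: mult_pCons_left)
  also have "\<dots> = (\<Sum>\<nu>\<le>h.
      smult (of_nat (2*n)) (smult (of_nat ((n - 1) choose (2*\<nu>)) * s \<nu>) ([:1, 4:] ^ (h - \<nu>))))"
    by (rule sum.cong[OF refl], rule summand) simp
  also have "\<dots> = smult (of_nat (2*n)) (even_binomial_poly s (n - 1))"
    unfolding even_binomial_poly_def smult_sum_right n by simp
  finally show ?thesis .
qed

lemma coeff_FF: "coeff (FF \<alpha> n) k = fc \<alpha> n k"
  unfolding FF_def by (auto simp: coeff_sum fc_def)

lemma fc_eq_sum:
  "fc \<alpha> n k = inverse (2 ^ n) * 4 ^ k *
     (\<Sum>\<nu>\<le>dd n. of_nat (n choose (2*\<nu>)) * of_nat ((dd n - \<nu>) choose k) * S1 \<alpha> (2*\<nu>))"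
proof (cases "k \<le> dd n")
  case True
  have "(2::complex) powi (2 * int k - int n) = 2 powi int (2 * k) / 2 powi int n"
    by (simp add: power_int_diff)
  also have "\<dots> = 2 ^ (2 * k) / 2 ^ n"
    by (simp only: power_int_of_nat)
  also have "\<dots> = inverse (2 ^ n) * 4 ^ k"
    by (simp add: power_mult divide_inverse)
  finally have "(2::complex) powi (2 * int k - int n) = inverse (2 ^ n) * 4 ^ k" .
  moreover have "(\<Sum>\<nu>\<le>dd n - k. of_nat (n choose (2*\<nu>)) * of_nat ((dd n - \<nu>) choose k) * S1 \<alpha> (2*\<nu>))
      = (\<Sum>\<nu>\<le>dd n. of_nat (n choose (2*\<nu>)) * of_nat ((dd n - \<nu>) choose k) * S1 \<alpha> (2*\<nu>) :: complex)"
    by (rule sum.mono_neutral_left) auto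
  ultimately show ?thesis
    using True by (simp add: fc_def)
next
  case False
  then show ?thesis
    by (simp add: fc_def binomial_eq_0)
qed

lemma FF_eq_even_binomial_poly:
  "FF \<alpha> n = smult (inverse (2 ^ n)) (even_binomial_poly (\<lambda>\<nu>. S1 \<alpha> (2*\<nu>)) n)"
  by (rule poly_eqI)
    (simp add: coeff_FF fc_eq_sum even_binomial_poly_def coeff_sum coeff_linear_poly_power'
      dd_def sum_distrib_left mult_ac)

lemma inverse_two_power_mult_double:
  "inverse (2 ^ n) * of_nat (2*n) = of_nat n * inverse (2 ^ (n - 1) :: 'a::field_char_0)"
  by (cases n) simp_all

lemma pderiv_FF_even:
  assumes "even n"
  shows "pderiv (FF \<alpha> n) = smult (of_nat n) (FF \<alpha> (n - 1))"
proof -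
  let ?G = "even_binomial_poly (\<lambda>\<nu>. S1 \<alpha> (2*\<nu>))"
  have "pderiv (FF \<alpha> n) = smult (inverse (2 ^ n)) (pderiv (?G n))"
    by (simp add: FF_eq_even_binomial_poly pderiv_smult)
  also have "\<dots> = smult (inverse (2 ^ n) * of_nat (2*n)) (?G (n - 1))"
    by (simp add: pderiv_even_binomial_poly_even[OF assms])
  also have "\<dots> = smult (of_nat n) (FF \<alpha> (n - 1))"
    by (simp only: FF_eq_even_binomial_poly smult_smult inverse_two_power_mult_double)
  finally show ?thesis .
qed

lemma pderiv_FF_odd:
  assumes "odd n"
  shows "smult 2 (FF \<alpha> n) + [:1, 4:] * pderiv (FF \<alpha> n) = smult (of_nat n) (FF \<alpha> (n - 1))"
proof -
  let ?G = "even_binomial_poly (\<lambda>\<nu>. S1 \<alpha> (2*\<nu>))"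
  have "smult 2 (FF \<alpha> n) + [:1, 4:] * pderiv (FF \<alpha> n)
      = smult (inverse (2 ^ n)) (smult 2 (?G n) + [:1, 4:] * pderiv (?G n))"
    by (simp add: FF_eq_even_binomial_poly pderiv_smult smult_add_right mult.commute del: mult_pCons_left)
  also have "\<dots> = smult (inverse (2 ^ n) * of_nat (2*n)) (?G (n - 1))"
    by (simp only: pderiv_even_binomial_poly_odd[OF assms] smult_smult)
  also have "\<dots> = smult (of_nat n) (FF \<alpha> (n - 1))"
    by (simp only: FF_eq_even_binomial_poly smult_smult inverse_two_power_mult_double)
  finally show ?thesis .
qed

lemma pderiv2_FF_even:
  assumes "even n" and "0 < n"
  shows "smult (of_nat (n * (n - 1))) (FF \<alpha> (n - 2))
    = smult 2 (pderiv (FF \<alpha> n)) + [:1, 4:] * pderiv (pderiv (FF \<alpha> n))"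
proof -
  have odd: "odd (n - 1)" and n2: "n - 2 = n - 1 - 1"
    using assms by auto
  have "smult (of_nat (n * (n - 1))) (FF \<alpha> (n - 2))
      = smult (of_nat n) (smult (of_nat (n - 1)) (FF \<alpha> (n - 1 - 1)))"
    by (simp only: n2 of_nat_mult smult_smult mult.assoc)
  also have "\<dots> = smult (of_nat n) (smult 2 (FF \<alpha> (n - 1)) + [:1, 4:] * pderiv (FF \<alpha> (n - 1)))"
    by (simp only: pderiv_FF_odd[OF odd])
  also have "\<dots> = smult 2 (smult (of_nat n) (FF \<alpha> (n - 1)))
      + [:1, 4:] * pderiv (smult (of_nat n) (FF \<alpha> (n - 1)))"
    by (simp add: smult_add_right pderiv_smult mult.commute del: mult_pCons_left)
  also have "\<dots> = smult 2 (pderiv (FF \<alpha> n)) + [:1, 4:] * pderiv (pderiv (FF \<alpha> n))"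
    by (simp only: pderiv_FF_even[OF assms(1)])
  finally show ?thesis .
qed

lemma pderiv2_FF_odd:
  assumes "odd n"
  shows "smult (of_nat (n * (n - 1))) (FF \<alpha> (n - 2))
    = smult 6 (pderiv (FF \<alpha> n)) + [:1, 4:] * pderiv (pderiv (FF \<alpha> n))"
proof -
  have even: "even (n - 1)" and n2: "n - 2 = n - 1 - 1"
    using assms by auto
  have "smult (of_nat (n * (n - 1))) (FF \<alpha> (n - 2))
      = smult (of_nat n) (smult (of_nat (n - 1)) (FF \<alpha> (n - 1 - 1)))"
    by (simp only: n2 of_nat_mult smult_smult mult.assoc)
  also have "\<dots> = pderiv (smult (of_nat n) (FF \<alpha> (n - 1)))"
    by (simp only: pderiv_FF_even[OF even, symmetric] pderiv_smult)
  also have "\<dots> = pderiv (smult 2 (FF \<alpha> n) + [:1, 4:] * pderiv (FF \<alpha> n))"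
    by (simp only: pderiv_FF_odd[OF assms])
  also have "\<dots> = smult 6 (pderiv (FF \<alpha> n)) + [:1, 4:] * pderiv (pderiv (FF \<alpha> n))"
    by (simp add: pderiv_add pderiv_smult pderiv_mult pderiv_pCons algebra_simps
        flip: smult_add_left)
  finally show ?thesis .
qed

lemma fhat_rec_even:
  assumes "even n"
  shows "of_nat n * fhat \<alpha> (n - 1) k = fhat \<alpha> n (k + 1)"
proof -
  have "of_nat n * fc \<alpha> (n - 1) k = of_nat (Suc k) * fc \<alpha> n (Suc k)"
    using arg_cong[OF pderiv_FF_even[OF assms], of "\<lambda>p. coeff p k"]
    by (simp add: coeff_pderiv coeff_FF)
  then show ?thesis
    by (simp add: fhat_def algebra_simps)
qed

lemma fhat_rec_odd:
  assumes "odd n"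
  shows "of_nat n * fhat \<alpha> (n - 1) k = of_nat (4*k + 2) * fhat \<alpha> n k + fhat \<alpha> n (k + 1)"
proof -
  have "of_nat n * fc \<alpha> (n - 1) k = coeff (smult 2 (FF \<alpha> n) + [:1, 4:] * pderiv (FF \<alpha> n)) k"
    by (simp only: pderiv_FF_odd[OF assms] coeff_smult coeff_FF)
  also have "\<dots> = (2 + 4 * of_nat k) * fc \<alpha> n k + of_nat (Suc k) * fc \<alpha> n (Suc k)"
    by (simp only: coeff_add coeff_smult coeff_linear_poly_mult_pderiv coeff_FF) (simp add: algebra_simps)
  finally have "of_nat n * fc \<alpha> (n - 1) k = (2 + 4 * of_nat k) * fc \<alpha> n k + of_nat (Suc k) * fc \<alpha> n (Suc k)" .
  then show ?thesis
    by (simp add: fhat_def algebra_simps)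
qed

lemma fhat_rec2_even:
  assumes "even n" and "0 < n"
  shows "of_nat (n * (n - 1)) * fhat \<alpha> (n - 2) k
    = of_nat (4*k + 2) * fhat \<alpha> n (k + 1) + fhat \<alpha> n (k + 2)"
proof -
  have odd: "odd (n - 1)" and n2: "n - 2 = n - 1 - 1"
    using assms by auto
  have "of_nat (n * (n - 1)) * fhat \<alpha> (n - 2) k = of_nat n * (of_nat (n - 1) * fhat \<alpha> (n - 1 - 1) k)"
    by (simp only: n2 of_nat_mult mult.assoc)
  also have "\<dots> = of_nat (4*k + 2) * (of_nat n * fhat \<alpha> (n - 1) k) + of_nat n * fhat \<alpha> (n - 1) (k + 1)"
    by (simp only: fhat_rec_odd[OF odd]) (simp add: algebra_simps)
  also have "\<dots> = of_nat (4*k + 2) * fhat \<alpha> n (k + 1) + fhat \<alpha> n (k + 2)"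
    by (simp only: fhat_rec_even[OF assms(1)]) simp
  finally show ?thesis .
qed

lemma fhat_rec2_odd:
  assumes "odd n"
  shows "of_nat (n * (n - 1)) * fhat \<alpha> (n - 2) k
    = of_nat (4*k + 6) * fhat \<alpha> n (k + 1) + fhat \<alpha> n (k + 2)"
proof -
  have even: "even (n - 1)" and n2: "n - 2 = n - 1 - 1"
    using assms by auto
  have "of_nat (n * (n - 1)) * fhat \<alpha> (n - 2) k = of_nat n * (of_nat (n - 1) * fhat \<alpha> (n - 1 - 1) k)"
    by (simp only: n2 of_nat_mult mult.assoc)
  also have "\<dots> = of_nat n * fhat \<alpha> (n - 1) (k + 1)"
    by (simp only: fhat_rec_even[OF even])
  also have "\<dots> = of_nat (4*k + 6) * fhat \<alpha> n (k + 1) + fhat \<alpha> n (k + 2)"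
    by (simp only: fhat_rec_odd[OF assms]) (simp add: algebra_simps)
  finally show ?thesis .
qed

theorem mainTheorem14:
  fixes \<alpha> :: "nat \<Rightarrow> complex"
  assumes R: "propR \<alpha>"
  shows
   "(\<forall>n u. n \<ge> 2 \<and> even n \<longrightarrow>
       of_nat n * poly (FF \<alpha> (n-1)) u = poly (pderiv (FF \<alpha> n)) u)
  \<and> (\<forall>n u. n \<ge> 1 \<and> odd n \<longrightarrow>
       of_nat n * poly (FF \<alpha> (n-1)) u
         = 2 * poly (FF \<alpha> n) u + (4*u+1) * poly (pderiv (FF \<alpha> n)) u)
  \<and> (\<forall>n u. n \<ge> 2 \<and> even n \<longrightarrow>
       of_nat (n*(n-1)) * poly (FF \<alpha> (n-2)) u
         = 2 * poly (pderiv (FF \<alpha> n)) u + (4*u+1) * poly (pderiv (pderiv (FF \<alpha> n))) u)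
  \<and> (\<forall>n u. n \<ge> 3 \<and> odd n \<longrightarrow>
       of_nat (n*(n-1)) * poly (FF \<alpha> (n-2)) u
         = 6 * poly (pderiv (FF \<alpha> n)) u + (4*u+1) * poly (pderiv (pderiv (FF \<alpha> n))) u)
  \<and> (\<forall>n k. n \<ge> 2 \<and> even n \<and> k \<le> dd (n-1) \<longrightarrow>
       of_nat n * fhat \<alpha> (n-1) k = fhat \<alpha> n (k+1))
  \<and> (\<forall>n k. n \<ge> 1 \<and> odd n \<and> k \<le> dd (n-1) \<longrightarrow>
       of_nat n * fhat \<alpha> (n-1) k = of_nat (4*k+2) * fhat \<alpha> n k + fhat \<alpha> n (k+1))
  \<and> (\<forall>n k. n \<ge> 2 \<and> even n \<and> k \<le> dd (n-2) \<longrightarrow>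
       of_nat (n*(n-1)) * fhat \<alpha> (n-2) k
         = of_nat (4*k+2) * fhat \<alpha> n (k+1) + fhat \<alpha> n (k+2))
  \<and> (\<forall>n k. n \<ge> 3 \<and> odd n \<and> k \<le> dd (n-2) \<longrightarrow>
       of_nat (n*(n-1)) * fhat \<alpha> (n-2) k
         = of_nat (4*k+6) * fhat \<alpha> n (k+1) + fhat \<alpha> n (k+2))"
proof (intro conjI allI impI; elim conjE)
  fix n k :: nat and u :: complex
  show "of_nat n * poly (FF \<alpha> (n-1)) u = poly (pderiv (FF \<alpha> n)) u" if "even n"
    using that by (simp add: pderiv_FF_even)
  show "of_nat n * poly (FF \<alpha> (n-1)) u
      = 2 * poly (FF \<alpha> n) u + (4*u+1) * poly (pderiv (FF \<alpha> n)) u" if "odd n"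
    using arg_cong[OF pderiv_FF_odd[OF that], of "\<lambda>p. poly p u"] by (simp add: algebra_simps)
  show "of_nat (n*(n-1)) * poly (FF \<alpha> (n-2)) u
      = 2 * poly (pderiv (FF \<alpha> n)) u + (4*u+1) * poly (pderiv (pderiv (FF \<alpha> n))) u"
    if "even n" "n \<ge> 2"
    using arg_cong[OF pderiv2_FF_even[of n], of "\<lambda>p. poly p u"] that by (simp add: algebra_simps)
  show "of_nat (n*(n-1)) * poly (FF \<alpha> (n-2)) u
      = 6 * poly (pderiv (FF \<alpha> n)) u + (4*u+1) * poly (pderiv (pderiv (FF \<alpha> n))) u"
    if "odd n"
    using arg_cong[OF pderiv2_FF_odd[OF that], of "\<lambda>p. poly p u"] by (simp add: algebra_simps)
  show "of_nat n * fhat \<alpha> (n-1) k = fhat \<alpha> n (k+1)" if "even n"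
    using that by (rule fhat_rec_even)
  show "of_nat n * fhat \<alpha> (n-1) k = of_nat (4*k+2) * fhat \<alpha> n k + fhat \<alpha> n (k+1)" if "odd n"
    using that by (rule fhat_rec_odd)
  show "of_nat (n*(n-1)) * fhat \<alpha> (n-2) k
      = of_nat (4*k+2) * fhat \<alpha> n (k+1) + fhat \<alpha> n (k+2)" if "even n" "n \<ge> 2"
    using that by (intro fhat_rec2_even) simp_all
  show "of_nat (n*(n-1)) * fhat \<alpha> (n-2) k
      = of_nat (4*k+6) * fhat \<alpha> n (k+1) + fhat \<alpha> n (k+2)" if "odd n"
    using that by (rule fhat_rec2_odd)
qed

end
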